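(* Let $\mathbb{H}$ be a reproducing kernel Hilbert space with inner product $\langle\cdot,\cdot\rangle$ and feature map $\phi$, and let $(X,A,Y)$ be jointly distributed with $Y=\langle\phi(X),y\rangle$ and $A=\langle\phi(X),a\rangle$ for some nonzero $y,a\in\mathbb{H}$, with $\operatorname{Var}(Y),\operatorname{Var}(A)>0$; let $\rho_{YA}$ be the correlation coefficient of $Y$ and $A$. For $\lambda\ge 0$ define $$\mathbf{OPT}(\lambda):=\inf_{Z}\ \lambda\operatorname{Var}\mathbb{E}[A\mid Z]-\operatorname{Var}\mathbb{E}[Y\mid Z],$$ the infimum over all (possibly randomized) representations $Z=g(X)$. Then $$\mathbf{OPT}(\lambda)\ge\frac12\Big\{\lambda\operatorname{Var}(A)-\operatorname{Var}(Y)-\sqrt{\operatorname{Var}^2(Y)+\lambda^2\operatorname{Var}^2(A)-2\lambda\operatorname{Var}(A)\operatorname{Var}(Y)(2\rho_{YA}^2-1)}\Big\}.$$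
   Context: A (possibly randomized) representation is $Z=g(X,S)$ for a measurable $g$ and auxiliary randomness $S$ independent of $(X,A,Y)$. $\phi(X)$ is assumed to have finite second moment in $\mathbb{H}$. *)

theory Defs
  imports "HOL-Probability.Probability"
begin

definition cond_exp_given :: "'w measure \<Rightarrow> ('w \<Rightarrow> 'z) \<Rightarrow> 'z measure \<Rightarrow> ('w \<Rightarrow> real) \<Rightarrow> 'w \<Rightarrow> real" where
  "cond_exp_given M Z NZ f = real_cond_exp M (vimage_algebra (space M) Z NZ) f"

definition covariance :: "'w measure \<Rightarrow> ('w \<Rightarrow> real) \<Rightarrow> ('w \<Rightarrow> real) \<Rightarrow> real" where
  "covariance M f h = (\<integral>\<omega>. (f \<omega> - (\<integral>x. f x \<partial>M)) * (h \<omega> - (\<integral>x. h x \<partial>M)) \<partial>M)"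

definition correlation :: "'w measure \<Rightarrow> ('w \<Rightarrow> real) \<Rightarrow> ('w \<Rightarrow> real) \<Rightarrow> real" where
  "correlation M f h = covariance M f h / sqrt (prob_space.variance M f * prob_space.variance M h)"

end

theory Submission
  imports Defs
begin

text \<open>Let U and V be the conditional expectations of A and Y given Z. Conditional
  expectation is the orthogonal projection of L^2 onto the Z-measurable functions, so
  Var A = Var U + E (A - U)^2, Var Y = Var V + E (Y - V)^2 and
  Cov (Y, A) = Cov (V, U) + E ((Y - V) (A - U)). Cauchy-Schwarz on both parts of the covariance
  gives, for m = \<lambda> Var U - Var V, the quadratic constraint
  \<lambda> Cov (Y, A)^2 \<le> (\<lambda> Var A - m) (Var Y + m), so m lies above the smaller root of that
  quadratic, which is the stated bound.\<close>

lemma integrable_mult_of_square_integrable: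
  fixes f g :: "'a \<Rightarrow> real"
  assumes [measurable]: "f \<in> borel_measurable M" "g \<in> borel_measurable M"
    and "integrable M (\<lambda>x. (f x)\<^sup>2)" "integrable M (\<lambda>x. (g x)\<^sup>2)"
  shows "integrable M (\<lambda>x. f x * g x)"
proof (rule Bochner_Integration.integrable_bound)
  show "integrable M (\<lambda>x. (f x)\<^sup>2 + (g x)\<^sup>2)" using assms by auto
  show "AE x in M. norm (f x * g x) \<le> norm ((f x)\<^sup>2 + (g x)\<^sup>2)"
  proof (rule AE_I2)
    fix x
    have "2 * \<bar>f x * g x\<bar> \<le> (f x)\<^sup>2 + (g x)\<^sup>2"
      using sum_squares_bound[of "\<bar>f x\<bar>" "\<bar>g x\<bar>"] by (simp add: abs_mult)
    then show "norm (f x * g x) \<le> norm ((f x)\<^sup>2 + (g x)\<^sup>2)"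
      by simp
  qed
qed simp

lemma integral_mult_square_le:
  fixes f g :: "'a \<Rightarrow> real"
  assumes [measurable]: "f \<in> borel_measurable M" "g \<in> borel_measurable M"
    and f2: "integrable M (\<lambda>x. (f x)\<^sup>2)" and g2: "integrable M (\<lambda>x. (g x)\<^sup>2)"
  shows "(\<integral>x. f x * g x \<partial>M)\<^sup>2 \<le> (\<integral>x. (f x)\<^sup>2 \<partial>M) * (\<integral>x. (g x)\<^sup>2 \<partial>M)"
proof -
  have fg: "integrable M (\<lambda>x. \<bar>f x\<bar> * \<bar>g x\<bar>)"
    using integrable_mult_of_square_integrable[OF assms] by (simp flip: abs_mult)
  have "(\<integral>x. f x * g x \<partial>M)\<^sup>2 \<le> (\<integral>x. \<bar>f x\<bar> * \<bar>g x\<bar> \<partial>M)\<^sup>2"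
    using integral_abs_bound[of M "\<lambda>x. f x * g x"]
    by (subst abs_le_square_iff[symmetric]) (simp add: abs_mult)
  moreover have "ennreal ((\<integral>x. \<bar>f x\<bar> * \<bar>g x\<bar> \<partial>M)\<^sup>2)
      \<le> ennreal ((\<integral>x. (f x)\<^sup>2 \<partial>M) * (\<integral>x. (g x)\<^sup>2 \<partial>M))"
  proof -
    have "ennreal ((\<integral>x. \<bar>f x\<bar> * \<bar>g x\<bar> \<partial>M)\<^sup>2)
        = (\<integral>\<^sup>+x. ennreal \<bar>f x\<bar> * ennreal \<bar>g x\<bar> \<partial>M)\<^sup>2"
      using fg by (simp add: nn_integral_eq_integral ennreal_mult ennreal_power flip: ennreal_mult)
    also have "\<dots> \<le> (\<integral>\<^sup>+x. (ennreal \<bar>f x\<bar>)\<^sup>2 \<partial>M) * (\<integral>\<^sup>+x. (ennreal \<bar>g x\<bar>)\<^sup>2 \<partial>M)"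
      by (rule Cauchy_Schwarz_nn_integral) auto
    also have "\<dots> = ennreal ((\<integral>x. (f x)\<^sup>2 \<partial>M) * (\<integral>x. (g x)\<^sup>2 \<partial>M))"
      using f2 g2 by (simp add: ennreal_power nn_integral_eq_integral flip: ennreal_mult)
    finally show ?thesis .
  qed
  then have "(\<integral>x. \<bar>f x\<bar> * \<bar>g x\<bar> \<partial>M)\<^sup>2 \<le> (\<integral>x. (f x)\<^sup>2 \<partial>M) * (\<integral>x. (g x)\<^sup>2 \<partial>M)"
    by (simp add: ennreal_le_iff)
  ultimately show ?thesis by linarith
qed

lemma integrable_square_diff:
  fixes f g :: "'a \<Rightarrow> real"
  assumes "f \<in> borel_measurable M" "g \<in> borel_measurable M"
    and "integrable M (\<lambda>x. (f x)\<^sup>2)" "integrable M (\<lambda>x. (g x)\<^sup>2)"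
  shows "integrable M (\<lambda>x. (f x - g x)\<^sup>2)"
proof -
  have "integrable M (\<lambda>x. (f x)\<^sup>2 - 2 * (f x * g x) + (g x)\<^sup>2)"
    using integrable_mult_of_square_integrable[OF assms] assms by auto
  then show ?thesis by (simp add: power2_diff algebra_simps)
qed

lemma borel_measurable_inner_const:
  fixes \<psi> :: "'a \<Rightarrow> 'h::real_inner"
  assumes "\<psi> \<in> borel_measurable M"
  shows "(\<lambda>x. inner (\<psi> x) b) \<in> borel_measurable M"
  by (rule borel_measurable_continuous_on[OF _ assms]) (intro continuous_intros)

lemma integrable_square_inner:
  fixes \<psi> :: "'a \<Rightarrow> 'h::real_inner"
  assumes [measurable]: "\<psi> \<in> borel_measurable M"
    and "integrable M (\<lambda>x. (norm (\<psi> x))\<^sup>2)"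
  shows "integrable M (\<lambda>x. (inner (\<psi> x) b)\<^sup>2)"
proof (rule Bochner_Integration.integrable_bound)
  show "integrable M (\<lambda>x. (norm b)\<^sup>2 * (norm (\<psi> x))\<^sup>2)"
    using assms(2) by (rule integrable_mult_right)
  show "AE x in M. norm ((inner (\<psi> x) b)\<^sup>2) \<le> norm ((norm b)\<^sup>2 * (norm (\<psi> x))\<^sup>2)"
  proof (rule AE_I2)
    fix x
    have "\<bar>inner (\<psi> x) b\<bar>\<^sup>2 \<le> (norm (\<psi> x) * norm b)\<^sup>2"
      using Cauchy_Schwarz_ineq2 by (rule power_mono) simp
    then show "norm ((inner (\<psi> x) b)\<^sup>2) \<le> norm ((norm b)\<^sup>2 * (norm (\<psi> x))\<^sup>2)"
      by (simp add: power_mult_distrib mult.commute)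
  qed
qed (use borel_measurable_inner_const[OF assms(1)] in measurable)

lemma subalgebra_vimage_algebra:
  assumes "Z \<in> M \<rightarrow>\<^sub>M N"
  shows "subalgebra M (vimage_algebra (space M) Z N)"
  unfolding subalgebra_def
proof
  show "space (vimage_algebra (space M) Z N) = space M" by simp
  have "Z \<in> space M \<rightarrow> space N" using assms by (auto dest: measurable_space)
  then show "sets (vimage_algebra (space M) Z N) \<subseteq> sets M"
    using assms by (auto simp: sets_vimage_algebra2 intro: measurable_sets)
qed

lemma lower_root_le_of_quadratic_le:
  fixes m t k :: real
  assumes "m\<^sup>2 \<le> t * m + k"
  shows "(t - sqrt (t\<^sup>2 + 4 * k)) / 2 \<le> m"
proof -
  have "(t - 2 * m)\<^sup>2 \<le> t\<^sup>2 + 4 * k"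
    using assms by (simp add: power2_eq_square algebra_simps)
  then have "\<bar>t - 2 * m\<bar> \<le> sqrt (t\<^sup>2 + 4 * k)"
    using real_sqrt_le_mono by fastforce
  then have "t - sqrt (t\<^sup>2 + 4 * k) \<le> 2 * m"
    unfolding abs_le_iff by linarith
  then show ?thesis by simp
qed

lemma Cauchy_Schwarz_two_terms:
  fixes lam c1 c2 d e u v :: real
  assumes "0 \<le> d" "0 \<le> e" "0 \<le> u" "0 \<le> v" "0 \<le> lam"
    and "c1\<^sup>2 \<le> d * e" "c2\<^sup>2 \<le> u * v"
  shows "lam * (c1 + c2)\<^sup>2 \<le> (lam * d + v) * (e + lam * u)"
proof -
  have "c1\<^sup>2 * c2\<^sup>2 \<le> (d * e) * (u * v)"
    using assms by (intro mult_mono) auto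
  then have "4 * lam\<^sup>2 * (c1\<^sup>2 * c2\<^sup>2) \<le> 4 * lam\<^sup>2 * ((d * e) * (u * v))"
    by (rule mult_left_mono) simp
  then have "(2 * lam * c1 * c2)\<^sup>2 \<le> 4 * (lam\<^sup>2 * d * u) * (v * e)"
    by (simp add: power_mult_distrib ac_simps)
  also have "\<dots> \<le> (lam\<^sup>2 * d * u + v * e)\<^sup>2"
    using zero_le_power2[of "lam\<^sup>2 * d * u - v * e"] unfolding power2_diff power2_sum by linarith
  finally have "2 * lam * c1 * c2 \<le> lam\<^sup>2 * d * u + v * e"
    by (rule power2_le_imp_le) (use assms in simp)
  moreover have "lam * c1\<^sup>2 \<le> lam * (d * e)" "lam * c2\<^sup>2 \<le> lam * (u * v)"
    using assms by (auto intro: mult_left_mono)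
  ultimately show ?thesis
    by (simp add: power2_sum power2_eq_square algebra_simps)
qed

lemma tradeoff_lower_bound:
  fixes lam p q r c u v d e cuv cde :: real
  assumes "0 \<le> d" "0 \<le> e" "0 \<le> u" "0 \<le> v" "0 \<le> lam"
    and "cde\<^sup>2 \<le> d * e" "cuv\<^sup>2 \<le> u * v"
    and p: "p = u + d" and q: "q = v + e" and c: "c = cuv + cde" and "0 < p" "0 < q"
    and r: "r = c / sqrt (q * p)"
  shows "(1/2) * (lam * p - q - sqrt (q\<^sup>2 + lam\<^sup>2 * p\<^sup>2 - 2 * lam * p * q * (2 * r\<^sup>2 - 1)))
    \<le> lam * u - v"
proof -
  have "r\<^sup>2 = c\<^sup>2 / (q * p)"
    using r \<open>0 < p\<close> \<open>0 < q\<close> by (simp add: power_divide)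
  then have disc: "q\<^sup>2 + lam\<^sup>2 * p\<^sup>2 - 2 * lam * p * q * (2 * r\<^sup>2 - 1)
      = (lam * p - q)\<^sup>2 + 4 * (lam * (p * q - c\<^sup>2))"
    using \<open>0 < p\<close> \<open>0 < q\<close> by (simp add: field_simps power2_eq_square)
  have "lam * c\<^sup>2 \<le> (lam * d + v) * (e + lam * u)"
    unfolding c using assms by (subst add.commute) (rule Cauchy_Schwarz_two_terms)
  then have "(lam * u - v)\<^sup>2 \<le> (lam * p - q) * (lam * u - v) + lam * (p * q - c\<^sup>2)"
    unfolding p q by (simp add: algebra_simps power2_eq_square)
  then show ?thesis
    using lower_root_le_of_quadratic_le unfolding disc by fastforce
qed

context sigma_finite_subalgebra
begin

lemma square_integrable_real_cond_exp:
  fixes f :: "'a \<Rightarrow> real"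
  assumes "integrable M f" "integrable M (\<lambda>x. (f x)\<^sup>2)"
  shows "integrable M (\<lambda>x. (real_cond_exp M F f x)\<^sup>2)"
  by (rule integrable_convex_cond_exp[where I=UNIV and q="\<lambda>x. x\<^sup>2"])
    (use assms convex_power2 in auto)

lemma integral_mult_real_cond_exp_residual:
  fixes f h :: "'a \<Rightarrow> real"
  assumes f: "integrable M f" "integrable M (\<lambda>x. (f x)\<^sup>2)"
    and h: "h \<in> borel_measurable F" "integrable M (\<lambda>x. (h x)\<^sup>2)"
  shows "(\<integral>x. h x * (f x - real_cond_exp M F f x) \<partial>M) = 0"
proof -
  have [measurable]: "h \<in> borel_measurable M" by (rule measurable_from_subalg[OF subalg h(1)])
  have hf: "integrable M (\<lambda>x. h x * f x)"
    by (rule integrable_mult_of_square_integrable) (use f h in auto)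
  have "integrable M (\<lambda>x. h x * real_cond_exp M F f x)"
    and "(\<integral>x. h x * real_cond_exp M F f x \<partial>M) = (\<integral>x. h x * f x \<partial>M)"
    using real_cond_exp_intg[OF hf h(1)] f by auto
  with hf show ?thesis by (simp add: right_diff_distrib)
qed

end

context prob_space
begin

lemma variance_eq_covariance: "variance f = covariance M f f"
  unfolding covariance_def by (simp add: power2_eq_square)

lemma covariance_square_le:
  fixes f g :: "'a \<Rightarrow> real"
  assumes "f \<in> borel_measurable M" "g \<in> borel_measurable M"
    and "integrable M (\<lambda>x. (f x)\<^sup>2)" "integrable M (\<lambda>x. (g x)\<^sup>2)"
  shows "(covariance M f g)\<^sup>2 \<le> variance f * variance g"
  unfolding covariance_def
  by (rule integral_mult_square_le) (use assms in \<open>auto intro!: integrable_square_diff\<close>)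

lemma covariance_real_cond_exp_decomposition:
  fixes f g :: "'a \<Rightarrow> real"
  assumes "sigma_finite_subalgebra M F"
    and [measurable]: "f \<in> borel_measurable M" and f2: "integrable M (\<lambda>x. (f x)\<^sup>2)"
    and [measurable]: "g \<in> borel_measurable M" and g2: "integrable M (\<lambda>x. (g x)\<^sup>2)"
  shows "covariance M f g = covariance M (real_cond_exp M F f) (real_cond_exp M F g)
    + (\<integral>x. (f x - real_cond_exp M F f x) * (g x - real_cond_exp M F g x) \<partial>M)"
proof -
  interpret F: sigma_finite_subalgebra M F by fact
  define U V where "U = real_cond_exp M F f" and "V = real_cond_exp M F g"
  define U0 V0 where "U0 = (\<lambda>x. U x - expectation f)" and "V0 = (\<lambda>x. V x - expectation g)"
  have fi: "integrable M f" and gi: "integrable M g"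
    using f2 g2 by (auto intro: square_integrable_imp_integrable)
  have [measurable]: "U0 \<in> borel_measurable F" "V0 \<in> borel_measurable F"
    and UV: "U \<in> borel_measurable M" "V \<in> borel_measurable M"
    unfolding U0_def V0_def U_def V_def by auto
  have U2: "integrable M (\<lambda>x. (U x)\<^sup>2)" and V2: "integrable M (\<lambda>x. (V x)\<^sup>2)"
    unfolding U_def V_def using F.square_integrable_real_cond_exp fi gi f2 g2 by auto
  have U02: "integrable M (\<lambda>x. (U0 x)\<^sup>2)" and V02: "integrable M (\<lambda>x. (V0 x)\<^sup>2)"
    unfolding U0_def V0_def using U2 V2 UV by (auto intro!: integrable_square_diff)
  have "integrable M (\<lambda>x. (f x - U x)\<^sup>2)" "integrable M (\<lambda>x. (g x - V x)\<^sup>2)"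
    using U2 V2 UV f2 g2 by (auto intro!: integrable_square_diff)
  then have int: "integrable M (\<lambda>x. U0 x * V0 x)" "integrable M (\<lambda>x. (f x - U x) * (g x - V x))"
    "integrable M (\<lambda>x. U0 x * (g x - V x))" "integrable M (\<lambda>x. V0 x * (f x - U x))"
    using U02 V02 UV by (auto intro!: integrable_mult_of_square_integrable simp: U0_def V0_def)
  have orth: "(\<integral>x. U0 x * (g x - V x) \<partial>M) = 0" "(\<integral>x. V0 x * (f x - U x) \<partial>M) = 0"
    unfolding U_def V_def using F.integral_mult_real_cond_exp_residual fi gi f2 g2 U02 V02 by auto
  have "(f x - expectation f) * (g x - expectation g) = U0 x * V0 x + (f x - U x) * (g x - V x)
    + U0 x * (g x - V x) + V0 x * (f x - U x)" for x
    unfolding U0_def V0_def by algebra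
  then have "covariance M f g = (\<integral>x. U0 x * V0 x \<partial>M) + (\<integral>x. (f x - U x) * (g x - V x) \<partial>M)"
    unfolding covariance_def using int orth by simp
  moreover have "expectation U = expectation f" "expectation V = expectation g"
    unfolding U_def V_def using fi gi by (auto intro: F.real_cond_exp_int(2))
  ultimately show ?thesis
    unfolding covariance_def U0_def V0_def U_def V_def by simp
qed

lemma variance_real_cond_exp_tradeoff:
  fixes f g :: "'a \<Rightarrow> real" and lam :: real
  assumes F: "sigma_finite_subalgebra M F"
    and f [measurable]: "f \<in> borel_measurable M" and f2: "integrable M (\<lambda>x. (f x)\<^sup>2)"
    and g [measurable]: "g \<in> borel_measurable M" and g2: "integrable M (\<lambda>x. (g x)\<^sup>2)"
    and "0 < variance f" "0 < variance g" "0 \<le> lam"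
  shows "(1/2) * (lam * variance f - variance g
      - sqrt ((variance g)\<^sup>2 + lam\<^sup>2 * (variance f)\<^sup>2
        - 2 * lam * variance f * variance g * (2 * (correlation M g f)\<^sup>2 - 1)))
    \<le> lam * variance (real_cond_exp M F f) - variance (real_cond_exp M F g)"
proof -
  interpret F: sigma_finite_subalgebra M F by fact
  define U V where "U = real_cond_exp M F f" and "V = real_cond_exp M F g"
  have U [measurable]: "U \<in> borel_measurable M" and V [measurable]: "V \<in> borel_measurable M"
    unfolding U_def V_def by auto
  have "integrable M f" "integrable M g"
    using f2 g2 by (auto intro: square_integrable_imp_integrable)
  then have U2: "integrable M (\<lambda>x. (U x)\<^sup>2)" and V2: "integrable M (\<lambda>x. (V x)\<^sup>2)"
    unfolding U_def V_def using f2 g2 F.square_integrable_real_cond_exp by auto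
  have "integrable M (\<lambda>x. (f x - U x)\<^sup>2)" "integrable M (\<lambda>x. (g x - V x)\<^sup>2)"
    using f2 g2 U2 V2 by (auto intro: integrable_square_diff)
  then have "(\<integral>x. (g x - V x) * (f x - U x) \<partial>M)\<^sup>2
      \<le> (\<integral>x. (f x - U x)\<^sup>2 \<partial>M) * (\<integral>x. (g x - V x)\<^sup>2 \<partial>M)"
    using integral_mult_square_le[of "\<lambda>x. g x - V x" M "\<lambda>x. f x - U x"]
    by (simp add: mult.commute)
  moreover have "(covariance M V U)\<^sup>2 \<le> variance U * variance V"
    using covariance_square_le[OF V U V2 U2] by (simp add: mult.commute)
  moreover have "variance f = variance U + (\<integral>x. (f x - U x)\<^sup>2 \<partial>M)"
    using covariance_real_cond_exp_decomposition[OF F f f2 f f2]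
    unfolding variance_eq_covariance by (simp add: power2_eq_square U_def)
  moreover have "variance g = variance V + (\<integral>x. (g x - V x)\<^sup>2 \<partial>M)"
    using covariance_real_cond_exp_decomposition[OF F g g2 g g2]
    unfolding variance_eq_covariance by (simp add: power2_eq_square V_def)
  moreover have "covariance M g f = covariance M V U + (\<integral>x. (g x - V x) * (f x - U x) \<partial>M)"
    using covariance_real_cond_exp_decomposition[OF F g g2 f f2] by (simp add: U_def V_def)
  ultimately show ?thesis
    unfolding U_def[symmetric] V_def[symmetric]
    by (intro tradeoff_lower_bound) (use assms in \<open>auto simp: correlation_def\<close>)
qed

end

theorem theorem6:
  fixes M :: "'w measure" and NX :: "'x measure" and NS :: "'s measure" and NZ :: "'z measure"
    and X :: "'w \<Rightarrow> 'x" and S :: "'w \<Rightarrow> 's" and g :: "'x \<times> 's \<Rightarrow> 'z"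
    and \<phi> :: "'x \<Rightarrow> 'h::{real_inner, complete_space}"
    and y a :: 'h and lam :: real
    and Y A :: "'w \<Rightarrow> real"
  defines "Y \<equiv> \<lambda>\<omega>. inner (\<phi> (X \<omega>)) y"
    and "A \<equiv> \<lambda>\<omega>. inner (\<phi> (X \<omega>)) a"
  assumes P: "prob_space M"
    and X_meas: "X \<in> M \<rightarrow>\<^sub>M NX"
    and S_meas: "S \<in> M \<rightarrow>\<^sub>M NS"
    and phi_meas: "\<phi> \<in> NX \<rightarrow>\<^sub>M borel"
    and g_meas: "g \<in> NX \<Otimes>\<^sub>M NS \<rightarrow>\<^sub>M NZ"
    and second_moment: "integrable M (\<lambda>\<omega>. (norm (\<phi> (X \<omega>)))\<^sup>2)"
    and indep: "prob_space.indep_set M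
        {S -` B \<inter> space M | B. B \<in> sets NS}
        {(\<lambda>\<omega>. (X \<omega>, A \<omega>, Y \<omega>)) -` C \<inter> space M | C. C \<in> sets (NX \<Otimes>\<^sub>M (borel \<Otimes>\<^sub>M borel))}"
    and y_nz: "y \<noteq> 0" and a_nz: "a \<noteq> 0"
    and varY: "prob_space.variance M Y > 0"
    and varA: "prob_space.variance M A > 0"
    and lam: "lam \<ge> 0"
  shows "lam * prob_space.variance M (cond_exp_given M (\<lambda>\<omega>. g (X \<omega>, S \<omega>)) NZ A)
           - prob_space.variance M (cond_exp_given M (\<lambda>\<omega>. g (X \<omega>, S \<omega>)) NZ Y)
         \<ge> (1/2) * (lam * prob_space.variance M A - prob_space.variance M Y
              - sqrt ((prob_space.variance M Y)\<^sup>2 + lam\<^sup>2 * (prob_space.variance M A)\<^sup>2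
                  - 2 * lam * prob_space.variance M A * prob_space.variance M Y
                      * (2 * (correlation M Y A)\<^sup>2 - 1)))"
proof -
  interpret prob_space M by (rule P)
  define Z where "Z = (\<lambda>\<omega>. g (X \<omega>, S \<omega>))"
  have "Z \<in> M \<rightarrow>\<^sub>M NZ"
    unfolding Z_def using X_meas S_meas g_meas by measurable
  then have F: "sigma_finite_subalgebra M (vimage_algebra (space M) Z NZ)"
    by (intro finite_measure_subalgebra_is_sigma_finite finite_measure_subalgebra.intro
        finite_measure_subalgebra_axioms.intro subalgebra_vimage_algebra finite_measure_axioms)
  have \<phi>X: "(\<lambda>\<omega>. \<phi> (X \<omega>)) \<in> borel_measurable M"
    using X_meas phi_meas by measurable
  have "(\<lambda>\<omega>. inner (\<phi> (X \<omega>)) b) \<in> borel_measurable M" for b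
    using \<phi>X by (rule borel_measurable_inner_const)
  moreover have "integrable M (\<lambda>\<omega>. (inner (\<phi> (X \<omega>)) b)\<^sup>2)" for b
    using integrable_square_inner[OF \<phi>X second_moment] .
  ultimately show ?thesis
    unfolding cond_exp_given_def Z_def[symmetric]
    using variance_real_cond_exp_tradeoff[OF F, of A Y lam] varA varY lam
    by (simp add: A_def Y_def)
qed

end
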